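(* Let $p<q$ be positive integers and let $\alpha\in\{0,1,\dots,p-1\}$ or $\alpha>p-1$. Let $H^\circ_\alpha$ be the Hilbert space of functions on $\mathrm{B}_{p,q}$ with reproducing kernel $K_\alpha(z,u)=\det(1-zu^t)^{-\alpha}$. Then the subspace of $H^\circ_\alpha$ consisting of those functions which are (real-)analytic in some neighborhood of the closed ball $\overline{\mathrm{B}}_{p,q}$ is dense in $H^\circ_\alpha$.
   Context: $\mathrm{B}_{p,q}$ is the set of real $p\times q$ matrices of operator norm $<1$ (norm as operator between Euclidean spaces), and $\overline{\mathrm{B}}_{p,q}\subset\mathbb{R}^{pq}$ its closure (matrices of norm $\le 1$). For the stated $\alpha$ the kernel $K_\alpha(z,u)=\det(1-zu^t)^{-\alpha}$ on $\mathrm{B}_{p,q}\times \mathrm{B}_{p,q}$ is positive definite (Berezin), and $H^\circ_\alpha$ denotes the associated reproducing kernel Hilbert space: the completion of the span of the functions $z\mapsto K_\alpha(z,u)$, $u\in \mathrm{B}_{p,q}$, with $\langle K_\alpha(\cdot,u),K_\alpha(\cdot,w)\rangle=K_\alpha(w,u)$, realized as a space of (real-analytic) functions on $\mathrm{B}_{p,q}$ via $f(z)=\langle f,K_\alpha(\cdot,z)\rangle$. *)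

theory Defs
  imports "HOL-Analysis.Analysis"
begin

text \<open>Real p x q matrices are elements of type real^'q^'p (rows indexed by 'p,
  columns by 'q).  The operator norm is onorm of the linear map x |-> z *v x.\<close>

definition mball :: "(real^'q^'p) set" where
  "mball = {z. onorm (\<lambda>x. z *v x) < 1}"

definition mcball :: "(real^'q^'p) set" where
  "mcball = {z. onorm (\<lambda>x. z *v x) \<le> 1}"

definition Kker :: "real \<Rightarrow> real^'q^'p \<Rightarrow> real^'q^'p \<Rightarrow> real" where
  "Kker \<alpha> z u = det (mat 1 - z ** transpose u) powr (- \<alpha>)"

definition kfun :: "real \<Rightarrow> (real \<times> (real^'q^'p)) list \<Rightarrow> real^'q^'p \<Rightarrow> real" where
  "kfun \<alpha> cs z = (\<Sum>(a,u)\<leftarrow>cs. a * Kker \<alpha> z u)"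

text \<open>Squared Hilbert norm of such a combination:
  sum_{i,j} a_i a_j <K(.,u_i),K(.,u_j)> = sum_{i,j} a_i a_j K(u_j,u_i).\<close>
definition ksq :: "real \<Rightarrow> (real \<times> (real^'q^'p)) list \<Rightarrow> real" where
  "ksq \<alpha> cs = (\<Sum>(a,u)\<leftarrow>cs. \<Sum>(b,w)\<leftarrow>cs. a * b * Kker \<alpha> w u)"

definition kdiff :: "(real \<times> 'a) list \<Rightarrow> (real \<times> 'a) list \<Rightarrow> (real \<times> 'a) list" where
  "kdiff cs ds = cs @ map (\<lambda>(a,u). (- a, u)) ds"

text \<open>S is a Cauchy sequence (in the kernel norm) of combinations with centres in the
  open ball, converging pointwise on the ball to f; i.e. S represents the element f of the
  completion H_alpha, realized as a function on the ball.\<close>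
definition represents :: "real \<Rightarrow> (nat \<Rightarrow> (real \<times> (real^'q^'p)) list) \<Rightarrow> (real^'q^'p \<Rightarrow> real) \<Rightarrow> bool" where
  "represents \<alpha> S f \<longleftrightarrow>
     (\<forall>n. \<forall>(a,u)\<in>set (S n). u \<in> mball) \<and>
     (\<forall>e>0. \<exists>N. \<forall>m\<ge>N. \<forall>n\<ge>N. ksq \<alpha> (kdiff (S m) (S n)) < e) \<and>
     (\<forall>z\<in>mball. (\<lambda>n. kfun \<alpha> (S n) z) \<longlonglongrightarrow> f z)"

text \<open>Membership in H_alpha (only the values on the open ball matter).\<close>
definition inH :: "real \<Rightarrow> (real^'q^'p \<Rightarrow> real) \<Rightarrow> bool" where
  "inH \<alpha> f \<longleftrightarrow> (\<exists>S. represents \<alpha> S f)"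

text \<open>Real analyticity on an open set U of R^(pq): near every point a of U, f is the sum of
  an (unconditionally, hence absolutely) convergent multivariate power series in the
  pq matrix entries, with multi-indices m :: 'p x 'q => nat.\<close>
definition real_analytic_on :: "(real^'q^'p \<Rightarrow> real) \<Rightarrow> (real^'q^'p) set \<Rightarrow> bool" where
  "real_analytic_on f U \<longleftrightarrow>
     (\<forall>a\<in>U. \<exists>r>0. \<exists>c :: ('p \<times> 'q \<Rightarrow> nat) \<Rightarrow> real.
        \<forall>x\<in>ball a r. ((\<lambda>m. c m * (\<Prod>ij\<in>UNIV. (x $ fst ij $ snd ij - a $ fst ij $ snd ij) ^ m ij))
                        has_sum f x) UNIV)"

end

theory Submission
  imports Defs
begin

text \<open>Every element of H_alpha is, in norm, within any given distance of one of the finite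
  kernel combinations sum_i a_i K_alpha(., u_i) of its Cauchy sequence, whose centres u_i lie
  in the open ball. For ||u|| < 1 and ||z|| <= 1 the matrix 1 - z u^t is invertible, and as
  its determinant is 1 at z = 0 it stays positive along the segment from 0 to z. So near the
  closed ball K_alpha(., u) is a positive polynomial in the entries raised to the power -alpha,
  which is real analytic: substitute the polynomial into the binomial series and regroup the
  absolutely convergent expansion by monomials.\<close>

definition monomial :: "('p \<times> 'q \<Rightarrow> nat) \<Rightarrow> real^'q^'p \<Rightarrow> real" where
  "monomial m x = (\<Prod>ij\<in>UNIV. (x $ fst ij $ snd ij) ^ m ij)"

definition poly_in_entries :: "(real^'q^'p \<Rightarrow> real) \<Rightarrow> bool" where
  "poly_in_entries g \<longleftrightarrow> (\<exists>L. \<forall>x. g x = (\<Sum>(c,m)\<leftarrow>L. c * monomial m x))"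

lemma monomial_0 [simp]: "monomial (\<lambda>_. 0) x = 1"
  by (simp add: monomial_def)

lemma monomial_add: "monomial (\<lambda>ij. m ij + n ij) x = monomial m x * monomial n x"
  by (simp add: monomial_def power_add prod.distrib)

lemma monomial_sum_list: "monomial (\<lambda>ij. \<Sum>j\<leftarrow>w. m j ij) x = (\<Prod>j\<leftarrow>w. monomial (m j) x)"
  by (induction w) (simp_all add: monomial_add)

lemma monomial_at_0: "monomial m 0 = (if m = (\<lambda>_. 0) then 1 else 0)"
proof (cases "m = (\<lambda>_. 0)")
  case False
  then obtain ij where "m ij \<noteq> 0" by (metis ext)
  then have "monomial m 0 = 0" unfolding monomial_def by (intro prod_zero bexI[of _ ij]) auto
  with False show ?thesis by simp
qed simp

lemma monomial_const_matrix: "monomial m (\<chi> i j. r) = r ^ (\<Sum>ij\<in>UNIV. m ij)"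
  by (simp add: monomial_def power_sum)

lemma abs_monomial_le:
  assumes "\<And>i j. \<bar>y $ i $ j\<bar> \<le> r"
  shows "\<bar>monomial m y\<bar> \<le> monomial m (\<chi> i j. r)"
  unfolding monomial_def abs_prod
  by (intro prod_mono) (auto simp: power_abs intro!: power_mono assms)

lemma continuous_on_monomial: "continuous_on UNIV (monomial m)"
  unfolding monomial_def by (intro continuous_intros)

lemma poly_in_entries_const: "poly_in_entries (\<lambda>x. k)"
  unfolding poly_in_entries_def by (rule exI[of _ "[(k, \<lambda>_. 0)]"]) simp

lemma poly_in_entries_entry: "poly_in_entries (\<lambda>x::real^'q^'p. x $ i $ j)"
proof -
  have "monomial (\<lambda>ij. if ij = (i,j) then 1 else 0) x = x $ i $ j" for x :: "real^'q^'p"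
    unfolding monomial_def by (simp add: if_distrib cong: if_cong)
  then show ?thesis unfolding poly_in_entries_def
    by (intro exI[of _ "[(1, \<lambda>ij. if ij = (i,j) then 1 else 0)]"]) simp
qed

lemma poly_in_entries_add:
  assumes "poly_in_entries f" "poly_in_entries g"
  shows "poly_in_entries (\<lambda>x. f x + g x)"
proof -
  from assms obtain L1 L2 where "\<forall>x. f x = (\<Sum>(c,m)\<leftarrow>L1. c * monomial m x)"
    and "\<forall>x. g x = (\<Sum>(c,m)\<leftarrow>L2. c * monomial m x)" unfolding poly_in_entries_def by blast
  then show ?thesis unfolding poly_in_entries_def by (intro exI[of _ "L1 @ L2"]) simp
qed

lemma poly_in_entries_monomial_mult:
  assumes "poly_in_entries g"
  shows "poly_in_entries (\<lambda>x. c * monomial m x * g x)"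
proof -
  from assms obtain L where g: "\<forall>x. g x = (\<Sum>(d,n)\<leftarrow>L. d * monomial n x)"
    unfolding poly_in_entries_def by blast
  define L' where "L' = map (\<lambda>(d,n). (c * d, \<lambda>ij. m ij + n ij)) L"
  have "(\<Sum>(d,n)\<leftarrow>L'. d * monomial n x) = c * monomial m x * g x" for x
    unfolding L'_def g[rule_format] by (induction L) (auto simp: monomial_add algebra_simps)
  then show ?thesis unfolding poly_in_entries_def by metis
qed

lemma poly_in_entries_sum_list:
  "(\<And>e. e \<in> set L \<Longrightarrow> poly_in_entries (f e)) \<Longrightarrow> poly_in_entries (\<lambda>x. \<Sum>e\<leftarrow>L. f e x)"
  by (induction L) (auto intro: poly_in_entries_add poly_in_entries_const)

lemma poly_in_entries_mult:
  assumes "poly_in_entries f" "poly_in_entries g"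
  shows "poly_in_entries (\<lambda>x. f x * g x)"
proof -
  from assms(1) obtain L where f: "\<forall>x. f x = (\<Sum>(c,m)\<leftarrow>L. c * monomial m x)"
    unfolding poly_in_entries_def by blast
  have "poly_in_entries (\<lambda>x. \<Sum>(c,m)\<leftarrow>L. c * monomial m x * g x)"
    by (rule poly_in_entries_sum_list) (auto intro: poly_in_entries_monomial_mult assms(2))
  moreover have "(\<Sum>(c,m)\<leftarrow>L. c * monomial m x * g x) = f x * g x" for x
    unfolding f[rule_format] by (induction L) (auto simp: algebra_simps)
  ultimately show ?thesis by simp
qed

lemma poly_in_entries_sum:
  "finite S \<Longrightarrow> (\<And>s. s \<in> S \<Longrightarrow> poly_in_entries (f s)) \<Longrightarrow> poly_in_entries (\<lambda>x. \<Sum>s\<in>S. f s x)"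
  by (induction S rule: finite_induct) (auto intro: poly_in_entries_add poly_in_entries_const)

lemma poly_in_entries_prod:
  "finite S \<Longrightarrow> (\<And>s. s \<in> S \<Longrightarrow> poly_in_entries (f s)) \<Longrightarrow> poly_in_entries (\<lambda>x. \<Prod>s\<in>S. f s x)"
  by (induction S rule: finite_induct) (auto intro: poly_in_entries_mult poly_in_entries_const)

lemma poly_in_entries_power: "poly_in_entries f \<Longrightarrow> poly_in_entries (\<lambda>x. f x ^ n)"
  by (induction n) (auto intro: poly_in_entries_mult poly_in_entries_const)

lemma poly_in_entries_translate:
  assumes "poly_in_entries g"
  shows "poly_in_entries (\<lambda>x. g (x + a))"
proof -
  from assms obtain L where g: "\<forall>x. g x = (\<Sum>(c,m)\<leftarrow>L. c * monomial m x)"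
    unfolding poly_in_entries_def by blast
  have "poly_in_entries (\<lambda>x. c * monomial m (x + a))" for c m
    unfolding monomial_def
    by (auto intro!: poly_in_entries_mult poly_in_entries_const poly_in_entries_prod
        poly_in_entries_power poly_in_entries_add poly_in_entries_entry)
  then have "poly_in_entries (\<lambda>x. \<Sum>(c,m)\<leftarrow>L. c * monomial m (x + a))"
    by (intro poly_in_entries_sum_list) (auto simp: split_def)
  then show ?thesis by (simp add: g)
qed

lemma poly_in_entries_det_one_minus_mult_transpose:
  "poly_in_entries (\<lambda>x::real^'q^'p. det (mat 1 - x ** transpose (u::real^'q^'p)))"
proof -
  have entry: "(mat 1 - x ** transpose u) $ i $ k
      = (if i = k then 1 else 0) + (\<Sum>j\<in>UNIV. (- u $ k $ j) * x $ i $ j)" for x :: "real^'q^'p" and i k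
    by (simp add: matrix_matrix_mult_def transpose_def mat_def sum_negf mult.commute)
  show ?thesis unfolding det_def entry
    by (intro poly_in_entries_sum poly_in_entries_mult poly_in_entries_const poly_in_entries_prod
        poly_in_entries_add poly_in_entries_entry) auto
qed

lemma continuous_on_poly_in_entries:
  assumes "poly_in_entries g"
  shows "continuous_on UNIV g"
proof -
  from assms obtain L where "\<forall>x. g x = (\<Sum>(c,m)\<leftarrow>L. c * monomial m x)"
    unfolding poly_in_entries_def by blast
  then have g: "g = (\<lambda>x. \<Sum>(c,m)\<leftarrow>L. c * monomial m x)" by auto
  show ?thesis unfolding g
    by (induction L) (auto intro!: continuous_intros
        continuous_on_monomial[THEN continuous_on_compose2] simp: split_def)
qed

lemma poly_in_entries_centred:
  assumes "poly_in_entries P"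
  obtains J :: "nat set" and m c where "finite J" "\<And>j. j \<in> J \<Longrightarrow> m j \<noteq> (\<lambda>_. 0)"
    and "\<And>y. P (y + a) = P a + (\<Sum>j\<in>J. c j * monomial (m j) y)"
proof -
  obtain L0 where L0: "\<forall>y. P (y + a) = (\<Sum>(c,m)\<leftarrow>L0. c * monomial m y)"
    using poly_in_entries_translate[OF assms, of a] unfolding poly_in_entries_def by blast
  define L where "L = filter (\<lambda>(c,m). m \<noteq> (\<lambda>_. 0)) L0"
  have split: "(\<Sum>(c,m)\<leftarrow>L0. c * monomial m y)
      = (\<Sum>(c,m)\<leftarrow>L0. c * monomial m 0) + (\<Sum>(c,m)\<leftarrow>L. c * monomial m y)" for y
    unfolding L_def by (induction L0) (auto simp: monomial_at_0)
  have "P (y + a) = P a + (\<Sum>j\<in>{..<length L}. fst (L ! j) * monomial (snd (L ! j)) y)" for y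
    using L0[rule_format, of 0] L0[rule_format, of y] split[of y]
    by (simp add: sum_list_sum_nth atLeast0LessThan split_def)
  moreover have "snd (L ! j) \<noteq> (\<lambda>_. 0)" if "j \<in> {..<length L}" for j
    using nth_mem[of j L] that unfolding L_def by auto
  ultimately show ?thesis
    by (intro that[where J = "{..<length L}" and c = "\<lambda>j. fst (L ! j)" and m = "\<lambda>j. snd (L ! j)"]) auto
qed

lemma det_one_minus_mult_transpose_nonzero:
  fixes x u :: "real^'q^'p"
  assumes x: "\<And>v. norm (x *v v) \<le> norm v" and u: "onorm (\<lambda>v. u *v v) < 1"
  shows "det (mat 1 - x ** transpose u) \<noteq> 0"
proof -
  have "v = 0" if v: "(mat 1 - x ** transpose u) *v v = 0" for v
  proof -
    define w where "w = transpose u *v v"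
    have "v = x *v w" using v
      by (simp add: w_def matrix_vector_mult_diff_rdistrib matrix_vector_mul_assoc
          del: transpose_matrix_vector)
    then have vw: "norm v \<le> norm w" using x by simp
    have "norm w ^ 2 = inner v (u *v w)"
      by (simp add: w_def power2_norm_eq_inner dot_lmul_matrix)
    also have "\<dots> \<le> norm v * (onorm (\<lambda>v. u *v v) * norm w)"
      by (intro order_trans[OF norm_cauchy_schwarz] mult_left_mono onorm) auto
    also have "\<dots> \<le> onorm (\<lambda>v. u *v v) * norm w ^ 2"
      using vw by (simp add: power2_eq_square mult_ac mult_right_mono onorm_pos_le)
    finally have "norm w = 0" using u
      by (metis mult_le_cancel_right1 norm_ge_zero not_less zero_less_power2 mult.commute)
    then show "v = 0" using vw by simp
  qed
  then have "invertible (mat 1 - x ** transpose u)"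
    by (simp add: invertible_left_inverse matrix_left_invertible_ker)
  then show ?thesis by (simp add: invertible_det_nz)
qed

text \<open>The determinant does not vanish along the segment from 0 to z, and it is 1 at 0.\<close>
lemma det_one_minus_mult_transpose_pos:
  fixes z u :: "real^'q^'p"
  assumes z: "onorm (\<lambda>v. z *v v) \<le> 1" and u: "onorm (\<lambda>v. u *v v) < 1"
  shows "det (mat 1 - z ** transpose u) > 0"
proof (rule ccontr)
  define P where "P t = det (mat 1 - (t *\<^sub>R z) ** transpose u)" for t
  assume "\<not> ?thesis"
  then have "P 1 \<le> 0" by (simp add: P_def)
  moreover have "continuous_on {0..1} P"
    unfolding P_def
    using continuous_on_poly_in_entries[OF poly_in_entries_det_one_minus_mult_transpose[of u]]
    by (rule continuous_on_compose2) (auto intro!: continuous_intros)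
  ultimately obtain t where t: "t \<in> {0..1}" "P t = 0"
    using IVT2'[of P 1 0 0] by (auto simp: P_def)
  have "norm ((t *\<^sub>R z) *v v) \<le> norm v" for v
  proof -
    have "norm ((t *\<^sub>R z) *v v) = \<bar>t\<bar> * norm (z *v v)"
      by (simp add: scaleR_matrix_vector_assoc[symmetric])
    also have "\<dots> \<le> 1 * (1 * norm v)"
      using t(1) z by (intro mult_mono order_trans[OF onorm] mult_right_mono) auto
    finally show ?thesis by simp
  qed
  from det_one_minus_mult_transpose_nonzero[OF this u] t(2) show False by (simp add: P_def)
qed

lemma has_sum_regroup:
  fixes F :: "'a \<Rightarrow> 'b::{topological_comm_monoid_add,t3_space}"
  assumes "(F has_sum V) W" "\<And>i. (F has_sum G i) {w\<in>W. g w = i}"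
  shows "(G has_sum V) UNIV"
proof -
  have "inj_on (\<lambda>w. (g w, w)) W" by (auto simp: inj_on_def)
  moreover have "(\<lambda>w. (g w, w)) ` W = Sigma UNIV (\<lambda>i. {w\<in>W. g w = i})" by auto
  ultimately have "((\<lambda>p. F (snd p)) has_sum V) (Sigma UNIV (\<lambda>i. {w\<in>W. g w = i}))"
    using has_sum_reindex[of "\<lambda>w. (g w, w)" W "\<lambda>p. F (snd p)" V] assms(1) by (simp add: o_def)
  then show ?thesis
    by (rule has_sum_SigmaD) (use assms(2) in simp)
qed

lemma sum_lists_length_prod_list:
  fixes f :: "'j \<Rightarrow> 'a::comm_semiring_1"
  assumes "finite J"
  shows "(\<Sum>w\<in>{w. set w \<subseteq> J \<and> length w = n}. \<Prod>j\<leftarrow>w. f j) = (\<Sum>j\<in>J. f j) ^ n"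
proof (induction n)
  case 0
  have "{w. set w \<subseteq> J \<and> length w = 0} = {[]}" by auto
  then show ?case by simp
next
  case (Suc n)
  have "inj_on (\<lambda>(xs, j). j # xs) ({w. set w \<subseteq> J \<and> length w = n} \<times> J)"
    by (auto simp: inj_on_def)
  then have "(\<Sum>w\<in>{w. set w \<subseteq> J \<and> length w = Suc n}. \<Prod>j\<leftarrow>w. f j)
      = (\<Sum>w\<in>{w. set w \<subseteq> J \<and> length w = n}. \<Sum>j\<in>J. f j * (\<Prod>j\<leftarrow>w. f j))"
    unfolding lists_length_Suc_eq
    by (simp add: sum.reindex sum.cartesian_product case_prod_unfold)
  also have "\<dots> = (\<Sum>j\<in>J. f j) * (\<Sum>w\<in>{w. set w \<subseteq> J \<and> length w = n}. \<Prod>j\<leftarrow>w. f j)"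
    by (simp add: sum_product sum.swap[of _ J])
  finally show ?case using Suc by simp
qed

lemma has_sum_lists_length:
  fixes f :: "'j \<Rightarrow> real"
  assumes "finite J"
  shows "((\<lambda>w. b (length w) * (\<Prod>j\<leftarrow>w. f j)) has_sum b n * (\<Sum>j\<in>J. f j) ^ n)
           {w. set w \<subseteq> J \<and> length w = n}"
proof -
  let ?W = "{w. set w \<subseteq> J \<and> length w = n}"
  have "(\<Sum>w\<in>?W. b (length w) * (\<Prod>j\<leftarrow>w. f j)) = (\<Sum>w\<in>?W. b n * (\<Prod>j\<leftarrow>w. f j))"
    by (rule sum.cong) auto
  also have "\<dots> = b n * (\<Sum>j\<in>J. f j) ^ n"
    by (simp only: sum_distrib_left[symmetric] sum_lists_length_prod_list[OF assms])
  finally have sum_eq: "(\<Sum>w\<in>?W. b (length w) * (\<Prod>j\<leftarrow>w. f j)) = b n * (\<Sum>j\<in>J. f j) ^ n" .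
  show ?thesis
    using has_sum_finite[OF finite_lists_length_eq[OF assms, of n],
        where f = "\<lambda>w. b (length w) * (\<Prod>j\<leftarrow>w. f j)"]
    unfolding sum_eq .
qed

lemma summable_on_lists_prod_list:
  fixes f :: "'j \<Rightarrow> real"
  assumes J: "finite J" and f: "\<And>j. j \<in> J \<Longrightarrow> 0 \<le> f j" and b: "\<And>n. 0 \<le> b n"
    and summable: "summable (\<lambda>n. b n * (\<Sum>j\<in>J. f j) ^ n)"
  shows "(\<lambda>w. b (length w) * (\<Prod>j\<leftarrow>w. f j)) summable_on {w. set w \<subseteq> J}"
proof -
  have "(\<lambda>w. b (length w) * (\<Prod>j\<leftarrow>w. f j)) summable_on (\<Union>n. {w. set w \<subseteq> J \<and> length w = n})"
  proof (rule summable_on_UnionI)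
    show "(\<lambda>n. b n * (\<Sum>j\<in>J. f j) ^ n) summable_on UNIV"
      using summable b f by (intro summable_nonneg_imp_summable_on)
        (auto intro!: mult_nonneg_nonneg zero_le_power sum_nonneg)
  qed (auto intro!: has_sum_lists_length J mult_nonneg_nonneg prod_list_nonneg b f
        simp: disjoint_family_on_def)
  moreover have "(\<Union>n. {w. set w \<subseteq> J \<and> length w = n}) = {w. set w \<subseteq> J}" by auto
  ultimately show ?thesis by simp
qed

lemma has_sum_lists_regroup_length:
  fixes f :: "'j \<Rightarrow> real"
  assumes "finite J" "((\<lambda>w. b (length w) * (\<Prod>j\<leftarrow>w. f j)) has_sum V) {w. set w \<subseteq> J}"
  shows "((\<lambda>n. b n * (\<Sum>j\<in>J. f j) ^ n) has_sum V) UNIV"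
  by (rule has_sum_regroup[OF assms(2), of length]) (use has_sum_lists_length[OF assms(1)] in simp)

lemma prod_list_map_mult: "(\<Prod>j\<leftarrow>w. f j * g j) = (\<Prod>j\<leftarrow>w. f j) * (\<Prod>j\<leftarrow>w. g j :: 'a::comm_monoid_mult)"
  by (induction w) (simp_all add: ac_simps)

lemma abs_prod_list: "\<bar>\<Prod>j\<leftarrow>w. f j\<bar> = (\<Prod>j\<leftarrow>w. \<bar>f j\<bar> :: 'a::linordered_idom)"
  by (induction w) (simp_all add: abs_mult)

text \<open>Substituting a polynomial into a power series whose majorant converges gives a power
  series in the matrix entries: expand the powers as sums over words in the monomials, then
  regroup the absolutely summable family of words by multidegree.\<close>
lemma power_series_substitution:
  fixes \<beta> :: "nat \<Rightarrow> real" and c :: "'j \<Rightarrow> real" and m :: "'j \<Rightarrow> 'p::finite \<times> 'q::finite \<Rightarrow> nat"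
  assumes J: "finite J" and r: "0 \<le> r"
    and summable: "summable (\<lambda>n. \<bar>\<beta> n\<bar> * (\<Sum>j\<in>J. \<bar>c j\<bar> * monomial (m j) (\<chi> i j. r)) ^ n)"
  shows "\<exists>a. \<forall>y::real^'q^'p. (\<forall>i j. \<bar>y $ i $ j\<bar> \<le> r) \<longrightarrow>
           ((\<lambda>d. a d * monomial d y) has_sum (\<Sum>n. \<beta> n * (\<Sum>j\<in>J. c j * monomial (m j) y) ^ n)) UNIV"
proof -
  define W where "W = {w. set w \<subseteq> J}"
  define coef where "coef w = \<beta> (length w) * (\<Prod>j\<leftarrow>w. c j)" for w
  define deg where "deg w = (\<lambda>ij. \<Sum>j\<leftarrow>w. m j ij)" for w
  define a where "a d = infsum coef {w\<in>W. deg w = d}" for d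
  have "(\<lambda>w. \<bar>\<beta> (length w)\<bar> * (\<Prod>j\<leftarrow>w. \<bar>c j\<bar> * monomial (m j) (\<chi> i j. r))) summable_on W"
    unfolding W_def using J summable r
    by (intro summable_on_lists_prod_list) (auto simp: monomial_const_matrix)
  then have majorant: "(\<lambda>w. \<bar>coef w\<bar> * monomial (deg w) (\<chi> i j. r)) summable_on W"
    by (simp add: coef_def deg_def monomial_sum_list prod_list_map_mult abs_mult abs_prod_list
        mult.assoc)
  have "((\<lambda>d. a d * monomial d y) has_sum (\<Sum>n. \<beta> n * (\<Sum>j\<in>J. c j * monomial (m j) y) ^ n)) UNIV"
    if y: "\<forall>i j. \<bar>y $ i $ j\<bar> \<le> r" for y :: "real^'q^'p"
  proof -
    define F where "F w = coef w * monomial (deg w) y" for w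
    have "(\<lambda>w. norm (F w)) summable_on W"
    proof (rule Infinite_Sum.abs_summable_on_comparison_test'[OF majorant])
      fix w show "norm (F w) \<le> \<bar>coef w\<bar> * monomial (deg w) (\<chi> i j. r)"
        using abs_monomial_le[of y r "deg w"] y by (simp add: F_def abs_mult mult_left_mono)
    qed
    then have F: "F summable_on W" by (rule abs_summable_summable)
    define V where "V = infsum F W"
    have FV: "(F has_sum V) W" using F by (simp add: V_def)
    have "((\<lambda>n. \<beta> n * (\<Sum>j\<in>J. c j * monomial (m j) y) ^ n) has_sum V) UNIV"
      using FV unfolding W_def F_def coef_def deg_def
      by (intro has_sum_lists_regroup_length[OF J])
        (simp add: monomial_sum_list prod_list_map_mult mult.assoc)
    then have "V = (\<Sum>n. \<beta> n * (\<Sum>j\<in>J. c j * monomial (m j) y) ^ n)"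
      by (metis has_sum_imp_sums sums_unique)
    moreover have "((\<lambda>d. a d * monomial d y) has_sum V) UNIV"
    proof (rule has_sum_regroup[OF FV, of deg])
      fix d
      have "F summable_on {w\<in>W. deg w = d}"
        by (rule summable_on_subset_banach[OF F]) auto
      then have "(F has_sum infsum F {w\<in>W. deg w = d}) {w\<in>W. deg w = d}" by simp
      also have "infsum F {w\<in>W. deg w = d} = infsum (\<lambda>w. coef w * monomial d y) {w\<in>W. deg w = d}"
        by (rule infsum_cong) (simp add: F_def)
      finally show "(F has_sum a d * monomial d y) {w\<in>W. deg w = d}"
        by (simp add: a_def infsum_cmult_left')
    qed
    ultimately show ?thesis by simp
  qed
  then show ?thesis by blast
qed

definition power_series_at :: "(real^'q^'p \<Rightarrow> real) \<Rightarrow> real^'q^'p \<Rightarrow> bool" where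
  "power_series_at f a \<longleftrightarrow>
     (\<exists>r>0. \<exists>c. \<forall>x\<in>ball a r. ((\<lambda>m. c m * monomial m (x - a)) has_sum f x) UNIV)"

lemma real_analytic_on_iff_power_series_at:
  "real_analytic_on f U \<longleftrightarrow> (\<forall>a\<in>U. power_series_at f a)"
  by (simp add: real_analytic_on_def power_series_at_def monomial_def)

lemma abs_entry_le_norm: "\<bar>y $ i $ j\<bar> \<le> norm (y :: real^'q^'p)"
  using order_trans[OF component_le_norm_cart Finite_Cartesian_Product.norm_nth_le] .

lemma const_matrix_monomial_sum_small:
  fixes m :: "'j \<Rightarrow> 'p::finite \<times> 'q::finite \<Rightarrow> nat"
  assumes "\<And>j. j \<in> J \<Longrightarrow> m j \<noteq> (\<lambda>_. 0)" and "0 < D"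
  shows "\<exists>r>0. (\<Sum>j\<in>J. \<bar>c j\<bar> * monomial (m j) (\<chi> i j. r)) < D"
proof -
  define G where "G r = (\<Sum>j\<in>J. \<bar>c j\<bar> * monomial (m j) (\<chi> i j. r))" for r
  have "G 0 = 0"
  proof -
    have zero: "(\<chi> i j. 0) = (0 :: real^'q^'p)" by (simp add: vec_eq_iff)
    show ?thesis unfolding G_def zero by (auto simp: monomial_at_0 assms(1) intro!: sum.neutral)
  qed
  moreover have "(G \<longlongrightarrow> G 0) (at_right 0)"
    unfolding G_def monomial_const_matrix by (intro tendsto_intros)
  ultimately have "\<forall>\<^sub>F r in at_right 0. G r < D"
    using order_tendstoD(2)[OF _ assms(2)] by simp
  then obtain b where "b > 0" "\<And>r. 0 < r \<Longrightarrow> r < b \<Longrightarrow> G r < D"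
    unfolding eventually_at_right_field by blast
  then show ?thesis
    unfolding G_def by (metis field_lbound_gt_zero less_numeral_extra(1))
qed

lemma summable_abs_gen_binomial:
  assumes "0 \<le> t" "t < D"
  shows "summable (\<lambda>n. \<bar>(s gchoose n) * D powr (s - real n)\<bar> * t ^ n)"
proof -
  have "\<bar>(t + D) / 2\<bar> < D" using assms by simp
  from sums_summable[OF gen_binomial_real'[OF this, of s]]
  have "summable (\<lambda>n. (s gchoose n) * D powr (s - real n) * ((t + D) / 2) ^ n)"
    by (simp add: mult_ac)
  from powser_insidea[OF this, of t] show ?thesis
    using assms by (simp add: abs_mult)
qed

lemma power_series_at_powr:
  fixes P :: "real^'q^'p \<Rightarrow> real"
  assumes P: "poly_in_entries P" and Pa: "P a > 0"
  shows "power_series_at (\<lambda>x. P x powr s) a"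
proof -
  obtain J :: "nat set" and c m where J: "finite J" and m: "\<And>j. j \<in> J \<Longrightarrow> m j \<noteq> (\<lambda>_. 0)"
    and P_centred: "\<And>y. P (y + a) = P a + (\<Sum>j\<in>J. c j * monomial (m j) y)"
    by (rule poly_in_entries_centred[OF P, where a = a]) (rule that)
  define G where "G r = (\<Sum>j\<in>J. \<bar>c j\<bar> * monomial (m j) (\<chi> i j. r))" for r
  have "\<exists>r>0. G r < P a"
    unfolding G_def by (rule const_matrix_monomial_sum_small[OF m Pa])
  then obtain r where r: "0 < r" "G r < P a" by blast
  have G_nonneg: "0 \<le> G r"
    using r(1) by (auto simp: G_def monomial_const_matrix intro!: sum_nonneg)
  define \<beta> where "\<beta> n = (s gchoose n) * P a powr (s - real n)" for n
  have "summable (\<lambda>n. \<bar>\<beta> n\<bar> * G r ^ n)"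
    unfolding \<beta>_def by (rule summable_abs_gen_binomial[OF G_nonneg r(2)])
  then obtain coef where coef: "\<And>y. (\<forall>i j. \<bar>y $ i $ j\<bar> \<le> r) \<Longrightarrow>
      ((\<lambda>d. coef d * monomial d y) has_sum (\<Sum>n. \<beta> n * (\<Sum>j\<in>J. c j * monomial (m j) y) ^ n)) UNIV"
    using power_series_substitution[OF J less_imp_le[OF r(1)]] unfolding G_def by blast
  have "((\<lambda>d. coef d * monomial d (x - a)) has_sum P x powr s) UNIV" if "x \<in> ball a r" for x
  proof -
    define y where "y = x - a"
    have y: "\<bar>y $ i $ j\<bar> \<le> r" for i j
      using that abs_entry_le_norm[of y i j] by (simp add: y_def dist_norm norm_minus_commute)
    define Q where "Q = (\<Sum>j\<in>J. c j * monomial (m j) y)"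
    have "\<bar>Q\<bar> \<le> G r"
      unfolding Q_def G_def using y
      by (intro order_trans[OF sum_abs] sum_mono) (simp add: abs_mult abs_monomial_le mult_left_mono)
    then have "(\<lambda>n. \<beta> n * Q ^ n) sums (Q + P a) powr s"
      using gen_binomial_real'[of Q "P a" s] r(2) by (simp add: \<beta>_def mult_ac)
    moreover have "Q + P a = P x"
      using P_centred[of y] by (simp add: Q_def y_def)
    ultimately have "(\<Sum>n. \<beta> n * Q ^ n) = P x powr s"
      by (simp add: sums_unique[symmetric])
    then show ?thesis
      using coef[of y] y by (simp add: Q_def y_def)
  qed
  then show ?thesis unfolding power_series_at_def using r(1)
    by (intro exI[of _ r] conjI exI[of _ coef]) auto
qed

lemma power_series_at_zero: "power_series_at (\<lambda>_. 0) a"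
  unfolding power_series_at_def by (auto intro!: exI[of _ 1] exI[of _ "\<lambda>_. 0"])

lemma power_series_at_add:
  assumes "power_series_at f a" "power_series_at g a"
  shows "power_series_at (\<lambda>x. f x + g x) a"
proof -
  obtain r1 c1 where r1: "r1 > 0" "\<forall>x\<in>ball a r1. ((\<lambda>m. c1 m * monomial m (x - a)) has_sum f x) UNIV"
    using assms(1) unfolding power_series_at_def by blast
  obtain r2 c2 where r2: "r2 > 0" "\<forall>x\<in>ball a r2. ((\<lambda>m. c2 m * monomial m (x - a)) has_sum g x) UNIV"
    using assms(2) unfolding power_series_at_def by blast
  have "((\<lambda>m. (c1 m + c2 m) * monomial m (x - a)) has_sum (f x + g x)) UNIV"
    if "x \<in> ball a (min r1 r2)" for x
    unfolding distrib_right using that r1(2) r2(2) by (intro has_sum_add) auto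
  then show ?thesis unfolding power_series_at_def using r1(1) r2(1)
    by (intro exI[of _ "min r1 r2"] conjI exI[of _ "\<lambda>m. c1 m + c2 m"]) auto
qed

lemma power_series_at_cmult:
  assumes "power_series_at f a"
  shows "power_series_at (\<lambda>x. b * f x) a"
proof -
  obtain r c where r: "r > 0" "\<forall>x\<in>ball a r. ((\<lambda>m. c m * monomial m (x - a)) has_sum f x) UNIV"
    using assms unfolding power_series_at_def by blast
  have "((\<lambda>m. (b * c m) * monomial m (x - a)) has_sum (b * f x)) UNIV" if "x \<in> ball a r" for x
    unfolding mult.assoc using that r(2) by (intro has_sum_cmult_right) auto
  then show ?thesis unfolding power_series_at_def using r(1)
    by (intro exI[of _ r] conjI exI[of _ "\<lambda>m. b * c m"]) auto
qed

lemma power_series_at_kfun: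
  assumes "\<forall>(b,u)\<in>set cs. det (mat 1 - a ** transpose u) > 0"
  shows "power_series_at (kfun \<alpha> cs) a"
  using assms
proof (induction cs)
  case Nil
  then show ?case by (simp add: kfun_def power_series_at_zero)
next
  case (Cons bu cs)
  obtain b u where bu: "bu = (b, u)" by force
  have "power_series_at (\<lambda>x. Kker \<alpha> x u) a"
    unfolding Kker_def
    by (rule power_series_at_powr[OF poly_in_entries_det_one_minus_mult_transpose]) (use Cons.prems bu in simp)
  then have "power_series_at (\<lambda>x. b * Kker \<alpha> x u + kfun \<alpha> cs x) a"
    using Cons by (intro power_series_at_add power_series_at_cmult) auto
  then show ?case by (simp add: kfun_def bu)
qed

lemma ksq_kdiff_self: "ksq \<alpha> (kdiff cs cs) = 0"
proof -
  have "(\<Sum>(b,w)\<leftarrow>kdiff cs cs. a * b * Kker \<alpha> w u) = 0" for a u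
    unfolding kdiff_def by (induction cs) auto
  then show ?thesis unfolding ksq_def by (simp add: split_def)
qed

lemma represents_const:
  assumes "\<forall>(a,u)\<in>set cs. u \<in> mball"
  shows "represents \<alpha> (\<lambda>_. cs) (kfun \<alpha> cs)"
  using assms unfolding represents_def by (simp add: ksq_kdiff_self)

lemma kfun_real_analytic_near_mcball:
  assumes "\<forall>(a,u)\<in>set cs. u \<in> mball"
  shows "\<exists>U. open U \<and> mcball \<subseteq> U \<and> real_analytic_on (kfun \<alpha> cs) U"
proof (intro exI conjI)
  define U where "U = (\<Inter>u\<in>snd ` set cs. {x. 0 < det (mat 1 - x ** transpose u)})"
  show "open U" unfolding U_def
    by (intro open_INT finite_imageI finite_set ballI open_Collect_less continuous_on_const
        continuous_on_poly_in_entries[OF poly_in_entries_det_one_minus_mult_transpose])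
  show "mcball \<subseteq> U"
    using assms unfolding U_def mcball_def mball_def
    by (auto intro!: det_one_minus_mult_transpose_pos)
  show "real_analytic_on (kfun \<alpha> cs) U"
    unfolding real_analytic_on_iff_power_series_at
  proof
    fix a assume "a \<in> U"
    then have "\<forall>(b,u)\<in>set cs. det (mat 1 - a ** transpose u) > 0"
      unfolding U_def by force
    then show "power_series_at (kfun \<alpha> cs) a" by (rule power_series_at_kfun)
  qed
qed

theorem lemma3p1:
  fixes \<alpha> :: real
  assumes pq: "CARD('p::finite) < CARD('q::finite)"
    and alpha: "(\<exists>k::nat. k < CARD('p) \<and> \<alpha> = real k) \<or> \<alpha> > real CARD('p) - 1"
  shows "\<forall>f :: real^'q^'p \<Rightarrow> real. inH \<alpha> f \<longrightarrow>
           (\<forall>e>0. \<exists>h :: real^'q^'p \<Rightarrow> real.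
              inH \<alpha> h \<and>
              (\<exists>U. open U \<and> (mcball :: (real^'q^'p) set) \<subseteq> U \<and> real_analytic_on h U) \<and>
              (\<exists>S T. represents \<alpha> S f \<and> represents \<alpha> T h \<and>
                     (\<forall>\<^sub>F n in sequentially. ksq \<alpha> (kdiff (S n) (T n)) < e\<^sup>2)))"
proof (intro allI impI)
  fix f :: "real^'q^'p \<Rightarrow> real" and e :: real
  assume "inH \<alpha> f" "e > 0"
  then obtain S where S: "represents \<alpha> S f" unfolding inH_def by blast
  then obtain N where N: "\<forall>m\<ge>N. \<forall>n\<ge>N. ksq \<alpha> (kdiff (S m) (S n)) < e\<^sup>2"
    using \<open>e > 0\<close> unfolding represents_def by (meson zero_less_power)
  have centres: "\<forall>(a,u)\<in>set (S N). u \<in> mball"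
    using S unfolding represents_def by blast
  have T: "represents \<alpha> (\<lambda>_. S N) (kfun \<alpha> (S N))"
    by (rule represents_const[OF centres])
  have "\<forall>\<^sub>F n in sequentially. ksq \<alpha> (kdiff (S n) (S N)) < e\<^sup>2"
    using N unfolding eventually_sequentially by blast
  with S T have "\<exists>S' T. represents \<alpha> S' f \<and> represents \<alpha> T (kfun \<alpha> (S N)) \<and>
      (\<forall>\<^sub>F n in sequentially. ksq \<alpha> (kdiff (S' n) (T n)) < e\<^sup>2)"
    by (intro exI[of _ S] exI[of _ "\<lambda>_. S N"]) simp
  moreover have "inH \<alpha> (kfun \<alpha> (S N))"
    using T unfolding inH_def by blast
  ultimately show "\<exists>h. inH \<alpha> h \<and> (\<exists>U. open U \<and> mcball \<subseteq> U \<and> real_analytic_on h U) \<and>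
      (\<exists>S T. represents \<alpha> S f \<and> represents \<alpha> T h \<and>
        (\<forall>\<^sub>F n in sequentially. ksq \<alpha> (kdiff (S n) (T n)) < e\<^sup>2))"
    using kfun_real_analytic_near_mcball[OF centres] by (intro exI[of _ "kfun \<alpha> (S N)"]) simp
qed

end
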